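(* There is a constant $C_3=C_3(N)\ge1$ such that the following holds. Let $\Omega\subset\mathbb{R}^N$ be a non-empty open set and $\Sigma\subset\mathbb{R}^N$ an $n$-dimensional submanifold. If $T>0$ and $f\in\mathcal{VT}_1^+(T)$, then $$(4\pi T)^{\frac{N-n}{2}}\int_{\Sigma\cap\Omega}f\,d\mathcal{H}^n\le C_3\,\lambda_{CM}^n[\Sigma]\int_{\mathcal{T}_{2\sqrt T}(\Omega)}f\,d\mathcal{L}^N,$$ where $\mathcal{T}_r(\Omega)=\bigcup_{p\in\Omega}B_r(p)$. In particular, $\lambda_{CM}^n[\Sigma]\le\lambda_V^n[\Sigma]\le C_3\lambda_{CM}^n[\Sigma]$.
   Context: $\lambda_{CM}^n[\Sigma]=\sup_{\rho>0,\mathbf{x}_0}(4\pi\rho)^{-n/2}\int_\Sigma e^{-|\mathbf{x}-\mathbf{x}_0|^2/(4\rho)}\,d\mathcal{H}^n$. For positive $U\in C^2(\mathbb{R}^N)$, $\tau(U)=\sup\{\tau\ge0:2\tau\nabla^2\log U+g_{\mathbb{R}}\ge0\}$; $\mathcal{VT}_1^+(T)=\{u\in C^2\cap L^1(\mathbb{R}^N):u>0,\tau(u)\ge T,\int u=1\}$; $\lambda_V^n[\Sigma]=\sup_{T>0}\sup_{U\in\mathcal{VT}_1^+(T)}(4\pi T)^{(N-n)/2}\int_\Sigma U\,d\mathcal{H}^n$. *)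

theory Defs
  imports "HOL-Analysis.Analysis"
begin

text \<open>A real-valued function is smooth on an open set S if it is (Frechet) differentiable
  at every point of S and all its directional derivatives are again smooth on S
  (greatest fixed point: derivatives of all orders exist).\<close>
coinductive smooth_real_on :: "'a::euclidean_space set \<Rightarrow> ('a \<Rightarrow> real) \<Rightarrow> bool" where
  "\<lbrakk>\<forall>x\<in>S. f differentiable (at x);
    \<forall>v. smooth_real_on S (\<lambda>x. frechet_derivative f (at x) v)\<rbrakk> \<Longrightarrow> smooth_real_on S f"

definition smooth_on :: "'a::euclidean_space set \<Rightarrow> ('a \<Rightarrow> 'b::euclidean_space) \<Rightarrow> bool" where
  "smooth_on S f \<longleftrightarrow> (\<forall>b\<in>Basis. smooth_real_on S (\<lambda>x. f x \<bullet> b))"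

definition submanifold :: "nat \<Rightarrow> 'a::euclidean_space set \<Rightarrow> bool" where
  "submanifold n \<Sigma> \<longleftrightarrow>
    (\<forall>p\<in>\<Sigma>. \<exists>U W (\<Phi>::'a\<Rightarrow>'a) \<Psi> S.
        open U \<and> p \<in> U \<and> open W \<and>
        smooth_on U \<Phi> \<and> smooth_on W \<Psi> \<and> \<Phi> ` U = W \<and>
        (\<forall>x\<in>U. \<Psi> (\<Phi> x) = x) \<and> (\<forall>y\<in>W. \<Phi> (\<Psi> y) = y) \<and>
        subspace S \<and> dim S = n \<and> \<Phi> ` (\<Sigma> \<inter> U) = W \<inter> S)"

definition C2 :: "('a::euclidean_space \<Rightarrow> real) \<Rightarrow> bool" where
  "C2 f \<longleftrightarrow> (\<forall>x. f differentiable (at x)) \<and>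
     (\<forall>v x. (\<lambda>y. frechet_derivative f (at y) v) differentiable (at x)) \<and>
     (\<forall>v w. continuous_on UNIV
        (\<lambda>y. frechet_derivative (\<lambda>z. frechet_derivative f (at z) v) (at y) w))"

definition hess_form :: "('a::euclidean_space \<Rightarrow> real) \<Rightarrow> 'a \<Rightarrow> 'a \<Rightarrow> real" where
  "hess_form f x v = frechet_derivative (\<lambda>z. frechet_derivative f (at z) v) (at x) v"

definition tau_of :: "('a::euclidean_space \<Rightarrow> real) \<Rightarrow> ereal" where
  "tau_of U = Sup {ereal t | t. t \<ge> 0 \<and>
      (\<forall>x v. 2 * t * hess_form (\<lambda>y. ln (U y)) x v + (norm v)\<^sup>2 \<ge> 0)}"

definition VT1plus :: "real \<Rightarrow> ('a::euclidean_space \<Rightarrow> real) set" where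
  "VT1plus T = {u. C2 u \<and> integrable lborel u \<and> (\<forall>x. u x > 0) \<and>
                   tau_of u \<ge> ereal T \<and> integral\<^sup>L lborel u = 1}"

definition unit_ball_vol :: "nat \<Rightarrow> real" where
  "unit_ball_vol n = pi powr (real n / 2) / Gamma (real n / 2 + 1)"

definition hausdorff_pre :: "nat \<Rightarrow> real \<Rightarrow> 'a::euclidean_space set \<Rightarrow> ennreal" where
  "hausdorff_pre n \<delta> A = (INF C \<in> {C :: nat \<Rightarrow> 'a set. A \<subseteq> (\<Union>i. C i) \<and>
        (\<forall>i. bounded (C i) \<and> diameter (C i) \<le> \<delta>)}.
      (\<Sum>i. if C i = {} then 0 else ennreal (unit_ball_vol n * (diameter (C i) / 2) ^ n)))"

definition hausdorff_outer :: "nat \<Rightarrow> 'a::euclidean_space set \<Rightarrow> ennreal" where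
  "hausdorff_outer n A = (SUP \<delta> \<in> {0<..}. hausdorff_pre n \<delta> A)"

definition hausdorff_measure :: "nat \<Rightarrow> 'a::euclidean_space measure" where
  "hausdorff_measure n = measure_of UNIV (sets borel) (hausdorff_outer n)"

definition lambda_CM :: "nat \<Rightarrow> 'a::euclidean_space set \<Rightarrow> ennreal" where
  "lambda_CM n \<Sigma> = (SUP (\<rho>, x0) \<in> {0<..} \<times> UNIV.
      ennreal ((4 * pi * \<rho>) powr (- real n / 2)) *
      (\<integral>\<^sup>+ x \<in> \<Sigma>. ennreal (exp (- (norm (x - x0))\<^sup>2 / (4 * \<rho>))) \<partial>hausdorff_measure n))"

definition lambda_V :: "nat \<Rightarrow> 'a::euclidean_space set \<Rightarrow> ennreal" where
  "lambda_V n \<Sigma> = (SUP (T, U) \<in> {(T, U). T > 0 \<and> U \<in> VT1plus T}.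
      ennreal ((4 * pi * T) powr ((real DIM('a) - real n) / 2)) *
      (\<integral>\<^sup>+ x \<in> \<Sigma>. ennreal (U x) \<partial>hausdorff_measure n))"

definition tube :: "real \<Rightarrow> 'a::metric_space set \<Rightarrow> 'a set" where
  "tube r \<Omega> = (\<Union>p\<in>\<Omega>. ball p r)"

end

theory Submission
  imports Defs "HOL-Probability.Distributions"
begin

text \<open>Since \<open>\<tau>(f) \<ge> T\<close>, the function \<open>log f\<close> is semiconcave with Hessian at least
  \<open>-|v|\<^sup>2/T\<close>; adding its Taylor bounds at \<open>x \<plusminus> y\<close> gives \<open>f(x + y) + f(x - y) \<ge> 2 e\<^sup>-\<^sup>2 f(x)\<close>
  for \<open>|y| < 2\<surd>T\<close>, so \<open>f(x)\<close> is at most \<open>e\<^sup>2\<close> times the mean of \<open>f\<close> over \<open>B\<^sub>2\<^sub>\<surd>\<^sub>T(x)\<close>.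
  Integrating this over \<open>\<Sigma> \<inter> \<Omega>\<close> and exchanging the order of integration leaves the
  \<open>\<H>\<^sup>n\<close>-mass of \<open>\<Sigma>\<close> in balls \<open>B\<^sub>2\<^sub>\<surd>\<^sub>T(z)\<close>, which is at most \<open>e (4\<pi>T)\<^bsup>n/2\<^esup> \<lambda>\<^sub>C\<^sub>M[\<Sigma>]\<close>
  because the Gaussian \<open>exp(-|x - z|\<^sup>2/4T)\<close> is at least \<open>e\<^sup>-\<^sup>1\<close> there. This yields the
  localised estimate with \<open>C\<^sub>3 = e\<^sup>3 \<Gamma>(N/2 + 1)\<close>; for \<open>\<Omega> = \<real>\<^sup>N\<close> it gives
  \<open>\<lambda>\<^sub>V \<le> C\<^sub>3 \<lambda>\<^sub>C\<^sub>M\<close>, while \<open>\<lambda>\<^sub>C\<^sub>M \<le> \<lambda>\<^sub>V\<close> because the heat kernels lie in \<open>\<V>\<T>\<^sub>1\<^sup>+\<close>.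
  The submanifold hypothesis is used only for the Borel measurability of \<open>\<Sigma>\<close>.\<close>

lemma sets_hausdorff_measure [simp, measurable_cong]:
  "sets (hausdorff_measure n) = sets (borel :: 'a::euclidean_space measure)"
  unfolding hausdorff_measure_def by (metis sets.sets_measure_of_eq space_borel)

lemma space_hausdorff_measure [simp]:
  "space (hausdorff_measure n) = (UNIV :: 'a::euclidean_space set)"
  unfolding hausdorff_measure_def by (simp add: space_measure_of_conv)

lemma smooth_on_imp_continuous_on:
  fixes \<Phi> :: "'a::euclidean_space \<Rightarrow> 'b::euclidean_space"
  assumes "smooth_on U \<Phi>"
  shows "continuous_on U \<Phi>"
proof -
  have coord: "continuous_on U (\<lambda>x. \<Phi> x \<bullet> b)" if "b \<in> Basis" for b
  proof -
    have "smooth_real_on U (\<lambda>x. \<Phi> x \<bullet> b)" using assms that unfolding smooth_on_def by blast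
    then have "\<forall>x\<in>U. (\<lambda>x. \<Phi> x \<bullet> b) differentiable (at x)"
      by (cases rule: smooth_real_on.cases) auto
    then show ?thesis
      by (meson continuous_at_imp_continuous_on differentiable_imp_continuous_within)
  qed
  have "continuous_on U (\<lambda>x. \<Sum>b\<in>Basis. (\<Phi> x \<bullet> b) *\<^sub>R b)"
    by (intro continuous_intros coord)
  then show ?thesis by (simp add: euclidean_representation)
qed

text \<open>A submanifold is relatively closed in each chart domain, and countably many charts
  cover it (Lindelof).\<close>
lemma submanifold_sets_borel:
  fixes \<Sigma> :: "'a::euclidean_space set"
  assumes "submanifold n \<Sigma>"
  shows "\<Sigma> \<in> sets borel"
proof -
  define F where "F = {U::'a set. open U \<and> \<Sigma> \<inter> U \<in> sets borel}"
  have cover: "\<Sigma> \<subseteq> \<Union>F"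
  proof
    fix p assume "p \<in> \<Sigma>"
    then obtain U W and \<Phi> :: "'a \<Rightarrow> 'a" and \<Psi> S where
      U: "open U" "p \<in> U" "smooth_on U \<Phi>" "\<Phi> ` U = W"
      "\<forall>x\<in>U. \<Psi> (\<Phi> x) = x" "subspace S" "\<Phi> ` (\<Sigma> \<inter> U) = W \<inter> S"
      using assms unfolding submanifold_def by metis
    have chart: "\<Sigma> \<inter> U = U \<inter> \<Phi> -` S"
    proof
      show "\<Sigma> \<inter> U \<subseteq> U \<inter> \<Phi> -` S" using U(7) by auto
      show "U \<inter> \<Phi> -` S \<subseteq> \<Sigma> \<inter> U"
      proof
        fix x assume x: "x \<in> U \<inter> \<Phi> -` S"
        then obtain z where "z \<in> \<Sigma> \<inter> U" "\<Phi> z = \<Phi> x"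
          using U(4,7) by (metis IntI imageE image_eqI vimageE IntD1 IntD2)
        with U(5) x show "x \<in> \<Sigma> \<inter> U" by (metis IntD1 IntD2)
      qed
    qed
    have "closedin (top_of_set U) (U \<inter> \<Phi> -` S)"
      by (rule continuous_closedin_preimage
          [OF smooth_on_imp_continuous_on[OF U(3)] closed_subspace[OF U(6)]])
    then obtain C where "closed C" "U \<inter> \<Phi> -` S = U \<inter> C" by (auto simp: closedin_closed)
    then have "\<Sigma> \<inter> U \<in> sets borel" unfolding chart using U(1) by auto
    then show "p \<in> \<Union>F" using U(1,2) unfolding F_def by auto
  qed
  obtain F' where F': "F' \<subseteq> F" "countable F'" "\<Union>F' = \<Union>F"
    using Lindelof[of F] unfolding F_def by auto
  have "\<Sigma> = (\<Union>U\<in>F'. \<Sigma> \<inter> U)" using cover F'(3) by auto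
  also have "\<dots> \<in> sets borel"
    using F' unfolding F_def by (intro sets.countable_UN'') auto
  finally show ?thesis .
qed

section \<open>Log-semiconcavity\<close>

lemma has_real_derivative_along_line:
  fixes h :: "'a::real_normed_vector \<Rightarrow> real"
  assumes "h differentiable (at (x + s *\<^sub>R y))"
  shows "((\<lambda>s. h (x + s *\<^sub>R y)) has_real_derivative frechet_derivative h (at (x + s *\<^sub>R y)) y) (at s)"
proof -
  let ?D = "frechet_derivative h (at (x + s *\<^sub>R y))"
  have D: "(h has_derivative ?D) (at (x + s *\<^sub>R y))"
    using assms frechet_derivative_works by blast
  have "((h \<circ> (\<lambda>s. x + s *\<^sub>R y)) has_derivative (?D \<circ> (\<lambda>t. t *\<^sub>R y))) (at s)"
    by (rule diff_chain_at) (auto intro!: derivative_eq_intros D)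
  moreover have "?D \<circ> (\<lambda>t. t *\<^sub>R y) = (*) (?D y)"
    using linear_cmul[OF has_derivative_linear[OF D]] by (auto simp: fun_eq_iff mult.commute)
  ultimately show ?thesis
    by (simp add: has_field_derivative_def comp_def)
qed

text \<open>\<open>s \<mapsto> h (x + s y) + c s\<^sup>2 / 2\<close> is convex, so it lies above its tangent at \<open>0\<close>.\<close>
lemma hess_form_lower_imp_taylor_lower:
  fixes h :: "'a::euclidean_space \<Rightarrow> real"
  assumes diff: "\<And>z. h differentiable (at z)"
    and diff2: "\<And>z. (\<lambda>w. frechet_derivative h (at w) y) differentiable (at z)"
    and hess: "\<And>z. hess_form h z y \<ge> - c"
  shows "h (x + y) \<ge> h x + frechet_derivative h (at x) y - c / 2"
proof -
  define g where "g = (\<lambda>z. frechet_derivative h (at z) y)"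
  define p' where "p' = (\<lambda>s. g (x + s *\<^sub>R y) + c * s)"
  define q where "q = (\<lambda>s. h (x + s *\<^sub>R y) + c * s\<^sup>2 / 2 - p' 0 * s)"
  have p'_mono: "p' 0 \<le> p' s" if "0 \<le> s" for s
  proof (rule DERIV_nonneg_imp_nondecreasing[OF that])
    fix t
    have "((\<lambda>s. g (x + s *\<^sub>R y)) has_real_derivative hess_form h (x + t *\<^sub>R y) y) (at t)"
      unfolding g_def hess_form_def by (rule has_real_derivative_along_line[OF diff2])
    then have "(p' has_real_derivative hess_form h (x + t *\<^sub>R y) y + c) (at t)"
      unfolding p'_def by (auto intro!: derivative_eq_intros)
    moreover have "hess_form h (x + t *\<^sub>R y) y + c \<ge> 0" using hess[of "x + t *\<^sub>R y"] by linarith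
    ultimately show "\<exists>d. (p' has_real_derivative d) (at t) \<and> d \<ge> 0" by blast
  qed
  have "q 0 \<le> q 1"
  proof (rule DERIV_nonneg_imp_nondecreasing[OF zero_le_one])
    fix t :: real assume "0 \<le> t"
    have "((\<lambda>s. h (x + s *\<^sub>R y)) has_real_derivative g (x + t *\<^sub>R y)) (at t)"
      unfolding g_def by (rule has_real_derivative_along_line[OF diff])
    then have "(q has_real_derivative p' t - p' 0) (at t)"
      unfolding q_def p'_def by (auto intro!: derivative_eq_intros simp: power2_eq_square)
    then show "\<exists>d. (q has_real_derivative d) (at t) \<and> d \<ge> 0" using p'_mono[OF \<open>0 \<le> t\<close>] by force
  qed
  then show ?thesis unfolding q_def p'_def g_def by simp
qed

lemma VT1plusD:
  assumes "f \<in> VT1plus T"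
  shows "C2 f" "integrable lborel f" "\<And>x. f x > 0" "tau_of f \<ge> ereal T" "integral\<^sup>L lborel f = 1"
  using assms unfolding VT1plus_def by auto

lemma C2_imp_continuous_on: "C2 f \<Longrightarrow> continuous_on UNIV f"
  unfolding C2_def
  by (meson continuous_at_imp_continuous_on differentiable_imp_continuous_within)

lemma VT1plus_borel_measurable: "f \<in> VT1plus T \<Longrightarrow> f \<in> borel_measurable borel"
  by (rule borel_measurable_continuous_onI[OF C2_imp_continuous_on[OF VT1plusD(1)]])

lemma C2_ln_differentiable:
  fixes f :: "'a::euclidean_space \<Rightarrow> real"
  assumes "C2 f" "\<And>x. f x > 0"
  shows "(\<lambda>y. ln (f y)) differentiable (at z)"
    and "(\<lambda>z. frechet_derivative (\<lambda>y. ln (f y)) (at z) v) differentiable (at x)"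
proof -
  have D: "((\<lambda>y. ln (f y)) has_derivative (\<lambda>v. frechet_derivative f (at z) v / f z)) (at z)" for z
  proof -
    have "(f has_derivative frechet_derivative f (at z)) (at z)"
      using assms(1) frechet_derivative_works unfolding C2_def by blast
    from has_derivative_ln[OF assms(2) this] show ?thesis by (simp add: divide_inverse)
  qed
  then show "(\<lambda>y. ln (f y)) differentiable (at z)" using differentiable_def by blast
  have "(\<lambda>z. frechet_derivative (\<lambda>y. ln (f y)) (at z) v) = (\<lambda>z. frechet_derivative f (at z) v / f z)"
    using D frechet_derivative_at by (metis (no_types, lifting))
  moreover have "(\<lambda>z. frechet_derivative f (at z) v) differentiable (at x)" "f differentiable (at x)"
    using assms(1) unfolding C2_def by blast+
  ultimately show "(\<lambda>z. frechet_derivative (\<lambda>y. ln (f y)) (at z) v) differentiable (at x)"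
    using assms(2) by (auto intro!: differentiable_divide simp: less_imp_neq[symmetric])
qed

text \<open>Any admissible \<open>t > T/2\<close> in the definition of \<^const>\<open>tau_of\<close> will do, since admissibility
  passes to smaller \<open>t\<close>.\<close>
lemma tau_of_hess_form_lower:
  assumes "tau_of u \<ge> ereal T" "T > 0"
  shows "hess_form (\<lambda>y. ln (u y)) x v \<ge> - (norm v)\<^sup>2 / T"
proof -
  let ?H = "hess_form (\<lambda>y. ln (u y)) x v"
  have "ereal (T/2) < ereal T" using assms(2) by simp
  then have "ereal (T/2) < tau_of u" using assms(1) by (rule less_le_trans)
  then obtain t where t: "T/2 < t" "2 * t * ?H + (norm v)\<^sup>2 \<ge> 0"
    unfolding tau_of_def by (auto simp: less_Sup_iff)
  have "T * ?H + (norm v)\<^sup>2 \<ge> 0"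
  proof (cases "?H \<ge> 0")
    case False
    then have "T * ?H \<ge> 2 * t * ?H" using t(1) by (intro mult_right_mono_neg) auto
    then show ?thesis using t(2) by linarith
  qed (use assms in simp)
  then show ?thesis using assms(2) by (simp add: field_simps)
qed

lemma VT1plus_ln_taylor_lower:
  assumes f: "f \<in> VT1plus T" and T: "T > 0"
  shows "ln (f (x + y)) \<ge> ln (f x) + frechet_derivative (\<lambda>y. ln (f y)) (at x) y - (norm y)\<^sup>2 / (2 * T)"
  using hess_form_lower_imp_taylor_lower[of "\<lambda>y. ln (f y)" y "(norm y)\<^sup>2 / T" x]
    C2_ln_differentiable[OF VT1plusD(1,3)[OF f]] tau_of_hess_form_lower[OF VT1plusD(4)[OF f] T]
  by simp

text \<open>Adding the Taylor bounds at \<open>y\<close> and \<open>-y\<close> cancels the (unknown) gradient term,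
  since \<open>e\<^sup>d + e\<^sup>-\<^sup>d \<ge> 2\<close>.\<close>
lemma VT1plus_symmetric_sum_lower:
  assumes f: "f \<in> VT1plus T" and T: "T > 0" and y: "norm y < 2 * sqrt T"
  shows "f (x + y) + f (x - y) \<ge> 2 * exp (-2) * f x"
proof -
  have pos: "\<And>x. f x > 0" using VT1plusD(3)[OF f] .
  define D where "D = frechet_derivative (\<lambda>y. ln (f y)) (at x)"
  have "linear D" unfolding D_def
    using C2_ln_differentiable(1)[OF VT1plusD(1)[OF f] pos] frechet_derivative_works
      has_derivative_linear by blast
  then have Dm: "D (- y) = - D y" by (rule linear_neg)
  define c where "c = (norm y)\<^sup>2 / (2 * T)"
  have "(norm y)\<^sup>2 \<le> (2 * sqrt T)\<^sup>2" using y by (intro power_mono) auto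
  then have c2: "c \<le> 2" unfolding c_def using T by (simp add: field_simps)
  have "f (x + z) \<ge> f x * exp (D z) * exp (- c)" if "norm z = norm y" for z
  proof -
    have "ln (f x) + D z - c \<le> ln (f (x + z))"
      using VT1plus_ln_taylor_lower[OF f T, of x z] that unfolding D_def c_def by simp
    then have "exp (ln (f x) + D z - c) \<le> f (x + z)" using pos by (metis exp_le_cancel_iff exp_ln)
    then show ?thesis using pos by (simp add: exp_add exp_diff exp_minus field_simps)
  qed
  from this[of y] this[of "- y"] have "f (x + y) + f (x - y) \<ge> f x * (exp (D y) + exp (- D y)) * exp (- c)"
    by (simp add: Dm algebra_simps)
  moreover have "exp (D y) + exp (- D y) \<ge> 2"
    using exp_ge_add_one_self[of "D y"] exp_ge_add_one_self[of "- D y"] by linarith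
  then have "f x * (exp (D y) + exp (- D y)) * exp (- c) \<ge> f x * 2 * exp (-2)"
    using pos[of x] c2 by (intro mult_mono) auto
  ultimately show ?thesis by (simp add: algebra_simps)
qed

lemma nn_integral_lborel_unit_affine:
  fixes g :: "'a::euclidean_space \<Rightarrow> ennreal"
  assumes [measurable]: "g \<in> borel_measurable borel" and c: "\<bar>c\<bar> = 1"
  shows "(\<integral>\<^sup>+z. g z \<partial>lborel) = (\<integral>\<^sup>+y. g (x + c *\<^sub>R y) \<partial>lborel)"
  using c by (subst lborel_affine[of c x]) (auto simp: nn_integral_density nn_integral_distr)

lemma VT1plus_ball_integral_lower:
  fixes f :: "'a::euclidean_space \<Rightarrow> real"
  assumes f: "f \<in> VT1plus T" and T: "T > 0"
  shows "ennreal (f x) * emeasure lborel (ball (0::'a) (2 * sqrt T))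
    \<le> ennreal (exp 2) * (\<integral>\<^sup>+z\<in>ball x (2 * sqrt T). ennreal (f z) \<partial>lborel)"
proof -
  define r where "r = 2 * sqrt T"
  have [measurable]: "f \<in> borel_measurable borel" by (rule VT1plus_borel_measurable[OF f])
  have [measurable]: "ball (0::'a) r \<in> sets borel" by simp
  have pos: "\<And>x. f x > 0" using VT1plusD(3)[OF f] .
  define I where "I = (\<integral>\<^sup>+z\<in>ball x r. ennreal (f z) \<partial>lborel)"
  have I: "I = (\<integral>\<^sup>+y\<in>ball 0 r. ennreal (f (x + c *\<^sub>R y)) \<partial>lborel)" if "\<bar>c\<bar> = 1" for c
    unfolding I_def using that
    by (subst nn_integral_lborel_unit_affine[of _ c x])
       (auto intro!: nn_integral_cong simp: indicator_def dist_norm abs_if split: if_splits)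
  have "(\<integral>\<^sup>+y\<in>ball (0::'a) r. ennreal (2 * exp (-2) * f x) \<partial>lborel)
     \<le> (\<integral>\<^sup>+y\<in>ball 0 r. ennreal (f (x + y)) + ennreal (f (x - y)) \<partial>lborel)"
  proof (intro nn_integral_mono)
    fix y :: 'a
    have "2 * exp (-2) * f x \<le> f (x + y) + f (x - y)" if "y \<in> ball 0 r"
      using that VT1plus_symmetric_sum_lower[OF f T] unfolding r_def by simp
    then show "ennreal (2 * exp (-2) * f x) * indicator (ball 0 r) y
      \<le> (ennreal (f (x + y)) + ennreal (f (x - y))) * indicator (ball 0 r) y"
      using pos by (auto simp: indicator_def ennreal_plus[symmetric] less_imp_le simp del: ennreal_plus)
  qed
  also have "\<dots> = (\<integral>\<^sup>+y\<in>ball 0 r. ennreal (f (x + y)) \<partial>lborel) + (\<integral>\<^sup>+y\<in>ball 0 r. ennreal (f (x - y)) \<partial>lborel)"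
    by (simp add: distrib_right) (rule nn_integral_add; measurable)
  also have "\<dots> = 2 * I"
    using I[of 1] I[of "-1"] by (simp add: mult_2)
  finally have "ennreal (2 * exp (-2) * f x) * emeasure lborel (ball (0::'a) r) \<le> 2 * I"
    by (simp add: nn_integral_cmult_indicator)
  then have "ennreal (exp 2 / 2) * (ennreal (2 * exp (-2) * f x) * emeasure lborel (ball (0::'a) r))
      \<le> ennreal (exp 2 / 2) * (2 * I)"
    by (rule mult_left_mono) simp
  moreover have "ennreal (exp 2 / 2) * ennreal (2 * exp (-2) * f x) = ennreal (f x)"
    using pos[of x] by (simp add: ennreal_mult[symmetric] exp_minus field_simps del: ennreal_mult)
  moreover have "ennreal (exp 2 / 2) * 2 = ennreal (exp 2)"
    using ennreal_mult[of "exp 2 / 2" 2] by simp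
  ultimately show ?thesis unfolding I_def r_def by (simp add: mult.assoc[symmetric])
qed

lemma emeasure_ball_two_sqrt:
  assumes T: "T > 0"
  shows "emeasure lborel (ball (c::'a::euclidean_space) (2 * sqrt T))
    = ennreal ((4 * pi * T) powr (real DIM('a) / 2) / Gamma (real DIM('a) / 2 + 1))"
proof -
  have "(2 * sqrt T) ^ DIM('a) = sqrt (4 * T) ^ DIM('a)"
    by (simp add: real_sqrt_mult)
  also have "\<dots> = (4 * T) powr (real DIM('a) / 2)"
    using T by (simp add: powr_half_sqrt[symmetric] powr_realpow[symmetric] powr_powr)
  finally have "(2 * sqrt T) ^ DIM('a) = (4 * T) powr (real DIM('a) / 2)" .
  moreover have "(4 * pi * T) powr (real DIM('a) / 2) = pi powr (real DIM('a) / 2) * (4 * T) powr (real DIM('a) / 2)"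
    using T by (simp add: powr_mult[symmetric] mult_ac)
  ultimately show ?thesis
    using T by (simp add: emeasure_ball Ball_Volume.unit_ball_vol_def)
qed

section \<open>Hausdorff mass of balls\<close>

definition hausdorff_on :: "nat \<Rightarrow> 'a::euclidean_space set \<Rightarrow> 'a measure" where
  "hausdorff_on n \<Sigma> = density (hausdorff_measure n) (indicator \<Sigma>)"

lemma sets_hausdorff_on [simp, measurable_cong]:
  "sets (hausdorff_on n \<Sigma>) = sets (borel :: 'a::euclidean_space measure)"
  by (simp add: hausdorff_on_def)

lemma space_hausdorff_on [simp]: "space (hausdorff_on n \<Sigma>) = (UNIV :: 'a::euclidean_space set)"
  by (simp add: hausdorff_on_def)

lemma nn_integral_hausdorff_on:
  fixes \<Sigma> :: "'a::euclidean_space set"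
  assumes [measurable]: "\<Sigma> \<in> sets borel" "g \<in> borel_measurable borel"
  shows "(\<integral>\<^sup>+x. g x \<partial>hausdorff_on n \<Sigma>) = (\<integral>\<^sup>+x\<in>\<Sigma>. g x \<partial>hausdorff_measure n)"
  unfolding hausdorff_on_def by (subst nn_integral_density) (auto simp: mult.commute)

lemma gaussian_integral_le_lambda_CM:
  fixes \<Sigma> :: "'a::euclidean_space set"
  assumes T: "T > 0"
  shows "(\<integral>\<^sup>+x\<in>\<Sigma>. ennreal (exp (- (norm (x - z))\<^sup>2 / (4 * T))) \<partial>hausdorff_measure n)
    \<le> ennreal ((4 * pi * T) powr (real n / 2)) * lambda_CM n \<Sigma>"
proof -
  define J where "J = (\<integral>\<^sup>+x\<in>\<Sigma>. ennreal (exp (- (norm (x - z))\<^sup>2 / (4 * T))) \<partial>hausdorff_measure n)"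
  have "ennreal ((4 * pi * T) powr (- real n / 2)) * J \<le> lambda_CM n \<Sigma>"
    unfolding lambda_CM_def J_def by (rule SUP_upper2[of "(T, z)"]) (use T in auto)
  then have "ennreal ((4 * pi * T) powr (real n / 2)) * (ennreal ((4 * pi * T) powr (- real n / 2)) * J)
      \<le> ennreal ((4 * pi * T) powr (real n / 2)) * lambda_CM n \<Sigma>"
    by (rule mult_left_mono) simp
  moreover have "ennreal ((4 * pi * T) powr (real n / 2)) * ennreal ((4 * pi * T) powr (- real n / 2)) = 1"
    using T by (simp add: ennreal_mult[symmetric] powr_add[symmetric] del: ennreal_mult)
  ultimately show ?thesis unfolding J_def by (simp add: mult.assoc[symmetric])
qed

lemma emeasure_hausdorff_on_ball_le:
  fixes \<Sigma> :: "'a::euclidean_space set"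
  assumes T: "T > 0" and [measurable]: "\<Sigma> \<in> sets borel"
  shows "emeasure (hausdorff_on n \<Sigma>) (ball z R)
    \<le> ennreal (exp (R\<^sup>2 / (4 * T)) * (4 * pi * T) powr (real n / 2)) * lambda_CM n \<Sigma>"
proof -
  have "emeasure (hausdorff_on n \<Sigma>) (ball z R) = (\<integral>\<^sup>+x\<in>\<Sigma>. indicator (ball z R) x \<partial>hausdorff_measure n)"
    unfolding hausdorff_on_def by (subst emeasure_density) (auto simp: mult.commute)
  also have "\<dots> \<le> (\<integral>\<^sup>+x\<in>\<Sigma>. ennreal (exp (R\<^sup>2 / (4 * T))) * ennreal (exp (- (norm (x - z))\<^sup>2 / (4 * T))) \<partial>hausdorff_measure n)"
  proof (intro nn_integral_mono)
    fix x :: 'a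
    have "1 \<le> exp (R\<^sup>2 / (4 * T)) * exp (- (norm (x - z))\<^sup>2 / (4 * T))" if "x \<in> ball z R"
    proof -
      have "(norm (x - z))\<^sup>2 \<le> R\<^sup>2"
        using that by (intro power_mono) (auto simp: dist_norm norm_minus_commute)
      then show ?thesis using T by (simp add: exp_add[symmetric] field_simps)
    qed
    then show "indicator (ball z R) x * indicator \<Sigma> x
      \<le> ennreal (exp (R\<^sup>2 / (4 * T))) * ennreal (exp (- (norm (x - z))\<^sup>2 / (4 * T))) * indicator \<Sigma> x"
      by (auto simp: indicator_def ennreal_mult[symmetric] simp del: ennreal_mult intro!: ennreal_leI)
  qed
  also have "\<dots> = ennreal (exp (R\<^sup>2 / (4 * T))) * (\<integral>\<^sup>+x\<in>\<Sigma>. ennreal (exp (- (norm (x - z))\<^sup>2 / (4 * T))) \<partial>hausdorff_measure n)"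
    by (subst nn_integral_cmult[symmetric]) (auto simp: mult.assoc)
  also have "\<dots> \<le> ennreal (exp (R\<^sup>2 / (4 * T))) * (ennreal ((4 * pi * T) powr (real n / 2)) * lambda_CM n \<Sigma>)"
    by (rule mult_left_mono[OF gaussian_integral_le_lambda_CM[OF T]]) simp
  finally show ?thesis by (simp add: ennreal_mult mult.assoc)
qed

lemma sigma_finite_hausdorff_on:
  fixes \<Sigma> :: "'a::euclidean_space set"
  assumes \<Sigma>: "\<Sigma> \<in> sets borel" and fin: "lambda_CM n \<Sigma> < \<infinity>"
  shows "sigma_finite_measure (hausdorff_on n \<Sigma>)"
proof
  let ?A = "range (\<lambda>k::nat. ball (0::'a) (real k))"
  have "\<Union> ?A = UNIV"
    by (auto simp: dist_norm) (meson reals_Archimedean2)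
  moreover have "emeasure (hausdorff_on n \<Sigma>) a \<noteq> \<infinity>" if "a \<in> ?A" for a
  proof -
    from that obtain k :: nat where "a = ball 0 (real k)" by auto
    then have "emeasure (hausdorff_on n \<Sigma>) a
        \<le> ennreal (exp ((real k)\<^sup>2 / (4 * 1)) * (4 * pi * 1) powr (real n / 2)) * lambda_CM n \<Sigma>"
      using emeasure_hausdorff_on_ball_le[OF _ \<Sigma>, of 1] by simp
    also have "\<dots> < \<infinity>" using fin by (simp add: ennreal_mult_less_top)
    finally show ?thesis by simp
  qed
  ultimately show "\<exists>A. countable A \<and> A \<subseteq> sets (hausdorff_on n \<Sigma>) \<and> \<Union> A = space (hausdorff_on n \<Sigma>)
      \<and> (\<forall>a\<in>A. emeasure (hausdorff_on n \<Sigma>) a \<noteq> \<infinity>)"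
    by (intro exI[of _ ?A]) auto
qed

section \<open>The localised estimate\<close>

lemma nn_integral_ball_average_le:
  fixes \<nu> :: "'a::euclidean_space measure"
  assumes "sigma_finite_measure \<nu>" and sets_\<nu>: "sets \<nu> = sets borel"
    and [measurable]: "g \<in> borel_measurable borel" and mass: "\<And>z. emeasure \<nu> (ball z r) \<le> M"
  shows "(\<integral>\<^sup>+x. (\<integral>\<^sup>+z\<in>ball x r. g z \<partial>lborel) \<partial>\<nu>) \<le> M * (\<integral>\<^sup>+z. g z \<partial>lborel)"
proof -
  interpret \<nu>: sigma_finite_measure \<nu> by fact
  interpret pair_sigma_finite \<nu> lborel ..
  have [measurable_cong]: "sets (\<nu> \<Otimes>\<^sub>M lborel) = sets (borel \<Otimes>\<^sub>M (borel :: 'a measure))"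
    by (rule sets_pair_measure_cong) (simp_all add: sets_\<nu>)
  have [measurable]: "Measurable.pred (borel \<Otimes>\<^sub>M borel) (\<lambda>(x, z::'a). dist x z < r)"
    by measurable
  have "(\<lambda>(x, z). g z * indicator (ball x r) z) \<in> borel_measurable (\<nu> \<Otimes>\<^sub>M lborel)"
    by (simp add: indicator_def case_prod_beta)
  then have "(\<integral>\<^sup>+x. (\<integral>\<^sup>+z\<in>ball x r. g z \<partial>lborel) \<partial>\<nu>) = (\<integral>\<^sup>+z. (\<integral>\<^sup>+x. g z * indicator (ball z r) x \<partial>\<nu>) \<partial>lborel)"
    by (subst Fubini') (auto simp: indicator_def dist_commute)
  also have "\<dots> = (\<integral>\<^sup>+z. g z * emeasure \<nu> (ball z r) \<partial>lborel)"
    by (subst nn_integral_cmult) (auto simp: sets_\<nu> intro!: borel_measurable_indicator)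
  also have "\<dots> \<le> (\<integral>\<^sup>+z. M * g z \<partial>lborel)"
    using mass by (intro nn_integral_mono) (metis mult.commute mult_left_mono zero_le)
  also have "\<dots> = M * (\<integral>\<^sup>+z. g z \<partial>lborel)"
    by (rule nn_integral_cmult) measurable
  finally show ?thesis .
qed

lemma open_tube: "open (tube r \<Omega>)"
  unfolding tube_def by auto

lemma ball_subset_tube: "x \<in> \<Omega> \<Longrightarrow> ball x r \<subseteq> tube r \<Omega>"
  unfolding tube_def by auto

lemma VT1plus_tube_integral_nonzero:
  fixes f :: "'a::euclidean_space \<Rightarrow> real"
  assumes f: "f \<in> VT1plus T" and T: "T > 0" and "p \<in> \<Omega>"
  shows "(\<integral>\<^sup>+x\<in>tube (2 * sqrt T) \<Omega>. ennreal (f x) \<partial>lborel) \<noteq> 0"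
proof -
  have "0 < ennreal (f p) * emeasure lborel (ball (0::'a) (2 * sqrt T))"
    using VT1plusD(3)[OF f] T by (simp add: emeasure_ball_two_sqrt ennreal_zero_less_mult_iff Gamma_real_pos)
  also have "\<dots> \<le> ennreal (exp 2) * (\<integral>\<^sup>+x\<in>ball p (2 * sqrt T). ennreal (f x) \<partial>lborel)"
    by (rule VT1plus_ball_integral_lower[OF f T])
  also have "\<dots> \<le> ennreal (exp 2) * (\<integral>\<^sup>+x\<in>tube (2 * sqrt T) \<Omega>. ennreal (f x) \<partial>lborel)"
    using ball_subset_tube[OF \<open>p \<in> \<Omega>\<close>, of "2 * sqrt T"]
    by (intro mult_left_mono nn_integral_mono) (auto simp: indicator_def subset_iff)
  finally show ?thesis by auto
qed

lemma VT1plus_localized_estimate: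
  fixes \<Omega> \<Sigma> :: "'a::euclidean_space set" and f :: "'a \<Rightarrow> real"
  assumes \<Omega>: "open \<Omega>" "\<Omega> \<noteq> {}" and \<Sigma>[measurable]: "\<Sigma> \<in> sets borel"
    and T: "T > 0" and f: "f \<in> VT1plus T"
  shows "emeasure lborel (ball (0::'a) (2 * sqrt T)) * (\<integral>\<^sup>+x\<in>\<Sigma> \<inter> \<Omega>. ennreal (f x) \<partial>hausdorff_measure n)
    \<le> ennreal (exp 3 * (4 * pi * T) powr (real n / 2)) * lambda_CM n \<Sigma>
      * (\<integral>\<^sup>+x\<in>tube (2 * sqrt T) \<Omega>. ennreal (f x) \<partial>lborel)"
    (is "?K * ?A \<le> ennreal (exp 3 * ?a) * ?\<Lambda> * ?P")
proof (cases "?\<Lambda> = \<infinity>")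
  case True
  obtain p where "p \<in> \<Omega>" using \<Omega>(2) by blast
  with True T show ?thesis
    by (simp add: ennreal_mult_eq_top_iff VT1plus_tube_integral_nonzero[OF f T])
next
  case False
  define r where "r = 2 * sqrt T"
  define g where "g = (\<lambda>z. ennreal (exp 2) * (ennreal (f z) * indicator (tube r \<Omega>) z))"
  define M where "M = ennreal (exp 1 * ?a) * ?\<Lambda>"
  have [measurable]: "f \<in> borel_measurable borel" "\<Omega> \<in> sets borel" "\<And>r. tube r \<Omega> \<in> sets borel"
    using VT1plus_borel_measurable[OF f] \<Omega>(1) borel_open[OF open_tube] by auto
  have "?A = (\<integral>\<^sup>+x. ennreal (f x) * indicator \<Omega> x \<partial>hausdorff_on n \<Sigma>)"
    by (subst nn_integral_hausdorff_on) (auto intro!: nn_integral_cong simp: indicator_def)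
  then have "?K * ?A = (\<integral>\<^sup>+x. ?K * (ennreal (f x) * indicator \<Omega> x) \<partial>hausdorff_on n \<Sigma>)"
    by (simp add: nn_integral_cmult)
  also have "\<dots> \<le> (\<integral>\<^sup>+x. (\<integral>\<^sup>+z\<in>ball x r. g z \<partial>lborel) \<partial>hausdorff_on n \<Sigma>)"
  proof (intro nn_integral_mono)
    fix x :: 'a
    have "?K * ennreal (f x) \<le> (\<integral>\<^sup>+z\<in>ball x r. g z \<partial>lborel)" if "x \<in> \<Omega>"
    proof -
      have "(\<integral>\<^sup>+z\<in>ball x r. g z \<partial>lborel) = ennreal (exp 2) * (\<integral>\<^sup>+z\<in>ball x r. ennreal (f z) \<partial>lborel)"
        using ball_subset_tube[OF that, of r]
        by (subst nn_integral_cmult[symmetric]) (auto intro!: nn_integral_cong simp: g_def indicator_def)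
      then show ?thesis
        using VT1plus_ball_integral_lower[OF f T, of x] by (simp add: r_def mult.commute)
    qed
    then show "?K * (ennreal (f x) * indicator \<Omega> x) \<le> (\<integral>\<^sup>+z\<in>ball x r. g z \<partial>lborel)"
      by (cases "x \<in> \<Omega>") auto
  qed
  also have "\<dots> \<le> M * (\<integral>\<^sup>+z. g z \<partial>lborel)"
  proof (rule nn_integral_ball_average_le)
    show "sigma_finite_measure (hausdorff_on n \<Sigma>)"
      using False by (intro sigma_finite_hausdorff_on) (auto simp: less_top)
    have "r\<^sup>2 / (4 * T) = 1" unfolding r_def using T by (simp add: power2_eq_square)
    with emeasure_hausdorff_on_ball_le[OF T \<Sigma>, of n _ r]
    show "emeasure (hausdorff_on n \<Sigma>) (ball z r) \<le> M" for z unfolding M_def by (simp only:)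
  qed (auto simp: g_def)
  also have "(\<integral>\<^sup>+z. g z \<partial>lborel) = ennreal (exp 2) * ?P"
    unfolding g_def r_def by (rule nn_integral_cmult) measurable
  also have "M * (ennreal (exp 2) * ?P) = ennreal (exp 3 * ?a) * ?\<Lambda> * ?P"
  proof -
    have "ennreal (exp 3 * ?a) = ennreal (exp 2) * ennreal (exp 1 * ?a)"
      by (simp add: ennreal_mult[symmetric] mult.assoc[symmetric] exp_add[symmetric] del: ennreal_mult)
    then show ?thesis unfolding M_def by (simp only: ac_simps)
  qed
  finally show ?thesis unfolding r_def .
qed

definition entropy_constant :: "nat \<Rightarrow> real" where
  "entropy_constant N = max 1 (exp 3 * Gamma (real N / 2 + 1))"

lemma one_le_entropy_constant: "1 \<le> entropy_constant N"
  by (simp add: entropy_constant_def)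

lemma VT1plus_localized_entropy_bound:
  fixes \<Omega> \<Sigma> :: "'a::euclidean_space set" and f :: "'a \<Rightarrow> real"
  assumes "open \<Omega>" "\<Omega> \<noteq> {}" "\<Sigma> \<in> sets borel" and T: "T > 0" and f: "f \<in> VT1plus T"
  shows "ennreal ((4 * pi * T) powr ((real DIM('a) - real n) / 2))
      * (\<integral>\<^sup>+x\<in>\<Sigma> \<inter> \<Omega>. ennreal (f x) \<partial>hausdorff_measure n)
    \<le> ennreal (entropy_constant DIM('a)) * lambda_CM n \<Sigma>
      * (\<integral>\<^sup>+x\<in>tube (2 * sqrt T) \<Omega>. ennreal (f x) \<partial>lborel)"
    (is "ennreal ?b * ?A \<le> ennreal ?C * ?\<Lambda> * ?P")
proof -
  let ?\<Gamma> = "Gamma (real DIM('a) / 2 + 1)"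
  define a where "a = (4 * pi * T) powr (real n / 2)"
  define k where "k = (4 * pi * T) powr (real DIM('a) / 2) / ?\<Gamma>"
  have k: "k > 0" unfolding k_def using T by (simp add: Gamma_real_pos)
  have "ennreal k * ?A \<le> ennreal (exp 3 * a) * ?\<Lambda> * ?P"
    using VT1plus_localized_estimate[OF assms] T by (simp add: emeasure_ball_two_sqrt k_def a_def)
  then have "ennreal (?b / k) * (ennreal k * ?A) \<le> ennreal (?b / k) * (ennreal (exp 3 * a) * ?\<Lambda> * ?P)"
    by (rule mult_left_mono) simp
  moreover have "ennreal (?b / k) * ennreal k = ennreal ?b"
    using k by (simp add: ennreal_mult[symmetric] del: ennreal_mult)
  moreover have "ennreal (?b / k) * ennreal (exp 3 * a) = ennreal (exp 3 * ?\<Gamma>)"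
  proof -
    have "?b * a = (4 * pi * T) powr (real DIM('a) / 2)"
      unfolding a_def by (simp add: powr_add[symmetric] diff_divide_distrib)
    then have "?b / k * (exp 3 * a) = exp 3 * ?\<Gamma>"
      using k unfolding k_def by (simp add: field_simps)
    moreover have "a \<ge> 0" unfolding a_def by simp
    ultimately show ?thesis using k by (subst ennreal_mult[symmetric]) auto
  qed
  ultimately have "ennreal ?b * ?A \<le> ennreal (exp 3 * ?\<Gamma>) * ?\<Lambda> * ?P"
    by (simp add: mult.assoc[symmetric])
  also have "\<dots> \<le> ennreal ?C * ?\<Lambda> * ?P"
    unfolding entropy_constant_def by (intro mult_right_mono ennreal_leI) auto
  finally show ?thesis .
qed

section \<open>Heat kernels\<close>

lemma nn_integral_gaussian_real:
  assumes \<rho>: "\<rho> > 0"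
  shows "(\<integral>\<^sup>+t. ennreal (exp (- t\<^sup>2 / (4 * \<rho>))) \<partial>lborel) = ennreal (sqrt (4 * pi * \<rho>))"
proof -
  define \<sigma> where "\<sigma> = sqrt (2 * \<rho>)"
  have \<sigma>: "\<sigma> > 0" "\<sigma>\<^sup>2 = 2 * \<rho>" unfolding \<sigma>_def using \<rho> by simp_all
  have density: "(\<integral>\<^sup>+t. ennreal (normal_density 0 \<sigma> t) \<partial>lborel) = 1"
    using nn_integral_eq_integral[OF integrable_normal_density[OF \<sigma>(1)] AE_I2[OF normal_density_nonneg]]
      integral_normal_density[OF \<sigma>(1)] by simp
  have "exp (- t\<^sup>2 / (4 * \<rho>)) = sqrt (4 * pi * \<rho>) * normal_density 0 \<sigma> t" for t
  proof -
    have "sqrt (2 * pi * \<sigma>\<^sup>2) = sqrt (4 * pi * \<rho>)" unfolding \<sigma>(2) by (simp add: mult_ac)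
    then show ?thesis using \<rho> unfolding normal_density_def \<sigma>(2) by (simp add: field_simps)
  qed
  then have "(\<integral>\<^sup>+t. ennreal (exp (- t\<^sup>2 / (4 * \<rho>))) \<partial>lborel)
      = (\<integral>\<^sup>+t. ennreal (sqrt (4 * pi * \<rho>)) * ennreal (normal_density 0 \<sigma> t) \<partial>lborel)"
    using \<rho> by (intro nn_integral_cong) (simp add: ennreal_mult)
  also have "\<dots> = ennreal (sqrt (4 * pi * \<rho>))"
    by (subst nn_integral_cmult) (auto simp: density)
  finally show ?thesis .
qed

text \<open>The Gaussian factorises over the coordinates.\<close>
lemma nn_integral_gaussian:
  fixes x0 :: "'a::euclidean_space"
  assumes \<rho>: "\<rho> > 0"
  shows "(\<integral>\<^sup>+x. ennreal (exp (- (norm (x - x0))\<^sup>2 / (4 * \<rho>))) \<partial>lborel)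
    = ennreal ((4 * pi * \<rho>) powr (real DIM('a) / 2))"
proof -
  have "(\<integral>\<^sup>+x. ennreal (exp (- (norm (x - x0))\<^sup>2 / (4 * \<rho>))) \<partial>lborel)
      = (\<integral>\<^sup>+y. ennreal (exp (- (norm (x0 + 1 *\<^sub>R y - x0))\<^sup>2 / (4 * \<rho>))) \<partial>lborel)"
    by (rule nn_integral_lborel_unit_affine) auto
  also have "\<dots> = (\<integral>\<^sup>+y. (\<Prod>b\<in>(Basis::'a set). ennreal (exp (- (y \<bullet> b)\<^sup>2 / (4 * \<rho>)))) \<partial>lborel)"
  proof (intro nn_integral_cong)
    fix y :: 'a
    have "(norm y)\<^sup>2 = (\<Sum>b\<in>Basis. y \<bullet> b * (y \<bullet> b))"
      unfolding power2_norm_eq_inner by (rule euclidean_inner)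
    then have "(norm y)\<^sup>2 = (\<Sum>b\<in>Basis. (y \<bullet> b)\<^sup>2)"
      by (simp only: power2_eq_square)
    then show "ennreal (exp (- (norm (x0 + 1 *\<^sub>R y - x0))\<^sup>2 / (4 * \<rho>))) = (\<Prod>b\<in>Basis. ennreal (exp (- (y \<bullet> b)\<^sup>2 / (4 * \<rho>))))"
      by (simp add: exp_sum[symmetric] sum_divide_distrib sum_negf prod_ennreal)
  qed
  also have "\<dots> = (\<Prod>b\<in>(Basis::'a set). (\<integral>\<^sup>+t. ennreal (exp (- t\<^sup>2 / (4 * \<rho>))) \<partial>lborel))"
    by (rule nn_integral_lborel_prod[where f = "\<lambda>b t. ennreal (exp (- t\<^sup>2 / (4 * \<rho>)))"]) auto
  also have "\<dots> = ennreal (sqrt (4 * pi * \<rho>)) ^ DIM('a)"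
    by (simp only: nn_integral_gaussian_real[OF \<rho>] prod_constant)
  also have "\<dots> = ennreal (sqrt (4 * pi * \<rho>) ^ DIM('a))"
    using \<rho> by (intro ennreal_power) simp
  also have "sqrt (4 * pi * \<rho>) ^ DIM('a) = (4 * pi * \<rho>) powr (real DIM('a) / 2)"
    using \<rho> by (simp add: powr_half_sqrt[symmetric] powr_realpow[symmetric] powr_powr)
  finally show ?thesis .
qed

lemma gaussian_has_derivative:
  fixes p :: "'a::real_inner" and c k :: real
  defines "U \<equiv> \<lambda>x. c * exp (k * ((x - p) \<bullet> (x - p)))"
  shows "(U has_derivative (\<lambda>v. U x * (2 * k * ((x - p) \<bullet> v)))) (at x)"
    and "((\<lambda>z. U z * (2 * k * ((z - p) \<bullet> v))) has_derivative
          (\<lambda>w. U x * (2 * k * (w \<bullet> v)) + U x * (2 * k * ((x - p) \<bullet> w)) * (2 * k * ((x - p) \<bullet> v)))) (at x)"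
proof -
  have quadratic: "((\<lambda>x. (x - p) \<bullet> (x - p)) has_derivative (\<lambda>v. 2 * ((x - p) \<bullet> v))) (at x)" for x
    by (rule has_derivative_eq_rhs, (rule derivative_intros)+) (simp add: fun_eq_iff inner_commute)
  have linear: "((\<lambda>z. 2 * k * ((z - p) \<bullet> v)) has_derivative (\<lambda>w. 2 * k * (w \<bullet> v))) (at x)"
    by (rule has_derivative_eq_rhs, (rule derivative_intros)+) (simp add: fun_eq_iff inner_commute)
  show U: "(U has_derivative (\<lambda>v. U x * (2 * k * ((x - p) \<bullet> v)))) (at x)" for x
    unfolding U_def
    by (rule has_derivative_eq_rhs, (rule derivative_intros quadratic)+) (simp add: fun_eq_iff algebra_simps)
  show "((\<lambda>z. U z * (2 * k * ((z - p) \<bullet> v))) has_derivative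
          (\<lambda>w. U x * (2 * k * (w \<bullet> v)) + U x * (2 * k * ((x - p) \<bullet> w)) * (2 * k * ((x - p) \<bullet> v)))) (at x)"
    by (rule has_derivative_eq_rhs, rule has_derivative_mult[OF U linear]) (simp add: fun_eq_iff algebra_simps)
qed

lemma gaussian_C2:
  fixes p :: "'a::euclidean_space"
  shows "C2 (\<lambda>x. c * exp (k * ((x - p) \<bullet> (x - p))))" (is "C2 ?U")
proof -
  note D = gaussian_has_derivative[of c k p]
  have D1: "frechet_derivative ?U (at x) = (\<lambda>v. ?U x * (2 * k * ((x - p) \<bullet> v)))" for x
    using D(1) by (rule frechet_derivative_at[symmetric])
  have D2: "frechet_derivative (\<lambda>z. frechet_derivative ?U (at z) v) (at x) =
      (\<lambda>w. ?U x * (2 * k * (w \<bullet> v)) + ?U x * (2 * k * ((x - p) \<bullet> w)) * (2 * k * ((x - p) \<bullet> v)))" for x v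
    unfolding D1 using D(2) by (rule frechet_derivative_at[symmetric])
  have "?U differentiable (at x)" for x
    using D(1) by (rule differentiableI)
  moreover have "(\<lambda>z. frechet_derivative ?U (at z) v) differentiable (at x)" for v x
    unfolding D1 using D(2) by (rule differentiableI)
  moreover have "continuous_on UNIV (\<lambda>y. frechet_derivative (\<lambda>z. frechet_derivative ?U (at z) v) (at y) w)" for v w
    unfolding D2 by (intro continuous_intros)
  ultimately show ?thesis unfolding C2_def by blast
qed

lemma hess_form_ln_gaussian:
  fixes p :: "'a::euclidean_space"
  assumes "c > 0"
  shows "hess_form (\<lambda>y. ln (c * exp (k * ((y - p) \<bullet> (y - p))))) x v = 2 * k * (v \<bullet> v)"
proof -
  have ln: "(\<lambda>y. ln (c * exp (k * ((y - p) \<bullet> (y - p))))) = (\<lambda>y. ln c + k * ((y - p) \<bullet> (y - p)))"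
    using assms by (simp add: fun_eq_iff ln_mult)
  have "((\<lambda>y. ln c + k * ((y - p) \<bullet> (y - p))) has_derivative (\<lambda>v. 2 * k * ((z - p) \<bullet> v))) (at z)" for z
    by (rule has_derivative_eq_rhs, (rule derivative_intros)+) (simp add: fun_eq_iff inner_commute algebra_simps)
  then have D1: "frechet_derivative (\<lambda>y. ln c + k * ((y - p) \<bullet> (y - p))) (at z) = (\<lambda>v. 2 * k * ((z - p) \<bullet> v))" for z
    by (rule frechet_derivative_at[symmetric])
  have "((\<lambda>z. 2 * k * ((z - p) \<bullet> v)) has_derivative (\<lambda>w. 2 * k * (w \<bullet> v))) (at x)"
    by (rule has_derivative_eq_rhs, (rule derivative_intros)+) (simp add: fun_eq_iff inner_commute)
  then have "frechet_derivative (\<lambda>z. 2 * k * ((z - p) \<bullet> v)) (at x) = (\<lambda>w. 2 * k * (w \<bullet> v))"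
    by (rule frechet_derivative_at[symmetric])
  then show ?thesis unfolding hess_form_def ln D1 by simp
qed

definition heat_kernel :: "real \<Rightarrow> 'a::euclidean_space \<Rightarrow> 'a \<Rightarrow> real" where
  "heat_kernel \<rho> x0 x = exp (- (norm (x - x0))\<^sup>2 / (4 * \<rho>)) / (4 * pi * \<rho>) powr (real DIM('a) / 2)"

lemma heat_kernel_in_VT1plus:
  fixes x0 :: "'a::euclidean_space"
  assumes \<rho>: "\<rho> > 0"
  shows "heat_kernel \<rho> x0 \<in> VT1plus \<rho>"
proof -
  define c where "c = 1 / (4 * pi * \<rho>) powr (real DIM('a) / 2)"
  define k where "k = - 1 / (4 * \<rho>)"
  have c: "c > 0" unfolding c_def using \<rho> by simp
  have U: "heat_kernel \<rho> x0 = (\<lambda>x. c * exp (k * ((x - x0) \<bullet> (x - x0))))"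
    unfolding heat_kernel_def c_def k_def by (simp add: fun_eq_iff power2_norm_eq_inner)
  have pos: "\<forall>x. heat_kernel \<rho> x0 x > 0" unfolding U using c by simp
  have "(\<integral>\<^sup>+x. ennreal (heat_kernel \<rho> x0 x) \<partial>lborel)
      = (\<integral>\<^sup>+x. ennreal c * ennreal (exp (- (norm (x - x0))\<^sup>2 / (4 * \<rho>))) \<partial>lborel)"
    unfolding heat_kernel_def c_def using \<rho>
    by (intro nn_integral_cong) (simp add: ennreal_mult[symmetric] del: ennreal_mult)
  also have "\<dots> = ennreal c * ennreal ((4 * pi * \<rho>) powr (real DIM('a) / 2))"
    using nn_integral_gaussian[OF \<rho>, of x0] by (subst nn_integral_cmult) auto
  also have "\<dots> = 1"
    unfolding c_def using \<rho> by (simp add: ennreal_mult[symmetric] del: ennreal_mult)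
  finally have "has_bochner_integral lborel (heat_kernel \<rho> x0) 1"
    using pos C2_imp_continuous_on[OF gaussian_C2] unfolding U
    by (intro has_bochner_integral_nn_integral borel_measurable_continuous_onI) (auto simp: less_imp_le)
  then have "integrable lborel (heat_kernel \<rho> x0)" "integral\<^sup>L lborel (heat_kernel \<rho> x0) = 1"
    by (auto simp: has_bochner_integral_iff)
  moreover have "tau_of (heat_kernel \<rho> x0) \<ge> ereal \<rho>"
    unfolding tau_of_def
  proof (rule Sup_upper, intro CollectI exI[of _ \<rho>] conjI allI)
    fix x v :: 'a
    have "2 * \<rho> * (2 * k) = -1" unfolding k_def using \<rho> by simp
    then show "0 \<le> 2 * \<rho> * hess_form (\<lambda>y. ln (heat_kernel \<rho> x0 y)) x v + (norm v)\<^sup>2"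
      unfolding U hess_form_ln_gaussian[OF c] power2_norm_eq_inner by (simp add: mult.assoc[symmetric])
  qed (use \<rho> in auto)
  ultimately show ?thesis
    using pos gaussian_C2 unfolding VT1plus_def U by blast
qed

text \<open>Heat kernels are admissible in \<^const>\<open>lambda_V\<close>, and they reproduce the Gaussian
  densities of \<^const>\<open>lambda_CM\<close>.\<close>
lemma lambda_CM_le_lambda_V:
  fixes \<Sigma> :: "'a::euclidean_space set"
  assumes [measurable]: "\<Sigma> \<in> sets borel"
  shows "lambda_CM n \<Sigma> \<le> lambda_V n \<Sigma>"
  unfolding lambda_CM_def
proof (rule SUP_least, safe)
  fix \<rho> :: real and x0 :: 'a
  assume \<rho>: "\<rho> > 0"
  define I where "I = (4 * pi * \<rho>) powr (real DIM('a) / 2)"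
  have I: "I > 0" unfolding I_def using \<rho> by simp
  have "ennreal ((4 * pi * \<rho>) powr ((real DIM('a) - real n) / 2))
      * (\<integral>\<^sup>+x\<in>\<Sigma>. ennreal (heat_kernel \<rho> x0 x) \<partial>hausdorff_measure n) \<le> lambda_V n \<Sigma>"
    unfolding lambda_V_def
    by (rule SUP_upper2[of "(\<rho>, heat_kernel \<rho> x0)"]) (use \<rho> heat_kernel_in_VT1plus in auto)
  moreover have "(\<integral>\<^sup>+x\<in>\<Sigma>. ennreal (heat_kernel \<rho> x0 x) \<partial>hausdorff_measure n)
      = ennreal (1 / I) * (\<integral>\<^sup>+x\<in>\<Sigma>. ennreal (exp (- (norm (x - x0))\<^sup>2 / (4 * \<rho>))) \<partial>hausdorff_measure n)"
    using I unfolding heat_kernel_def I_def[symmetric]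
    by (subst nn_integral_cmult[symmetric])
       (auto intro!: nn_integral_cong simp: ennreal_mult[symmetric] mult.assoc[symmetric] simp del: ennreal_mult)
  moreover have "ennreal ((4 * pi * \<rho>) powr ((real DIM('a) - real n) / 2)) * ennreal (1 / I)
      = ennreal ((4 * pi * \<rho>) powr (- real n / 2))"
    using \<rho> I unfolding I_def
    by (simp add: ennreal_mult[symmetric] powr_diff[symmetric] diff_divide_distrib del: ennreal_mult)
  ultimately show "ennreal ((4 * pi * \<rho>) powr (- real n / 2)) *
      (\<integral>\<^sup>+x\<in>\<Sigma>. ennreal (exp (- (norm (x - x0))\<^sup>2 / (4 * \<rho>))) \<partial>hausdorff_measure n) \<le> lambda_V n \<Sigma>"
    by (simp add: mult.assoc[symmetric])
qed

lemma lambda_V_le_lambda_CM: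
  fixes \<Sigma> :: "'a::euclidean_space set"
  assumes "\<Sigma> \<in> sets borel"
  shows "lambda_V n \<Sigma> \<le> ennreal (entropy_constant DIM('a)) * lambda_CM n \<Sigma>"
  unfolding lambda_V_def
proof (rule SUP_least, safe)
  fix T :: real and f :: "'a \<Rightarrow> real"
  assume T: "T > 0" and f: "f \<in> VT1plus T"
  have "tube (2 * sqrt T) (UNIV :: 'a set) = UNIV"
    unfolding tube_def using T by (auto intro!: bexI)
  moreover have "(\<integral>\<^sup>+x. ennreal (f x) \<partial>lborel) = 1"
    using nn_integral_eq_integral[OF VT1plusD(2)[OF f]] VT1plusD(3,5)[OF f] by (simp add: less_imp_le)
  ultimately show "ennreal ((4 * pi * T) powr ((real DIM('a) - real n) / 2)) *
      (\<integral>\<^sup>+x\<in>\<Sigma>. ennreal (f x) \<partial>hausdorff_measure n)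
      \<le> ennreal (entropy_constant DIM('a)) * lambda_CM n \<Sigma>"
    using VT1plus_localized_entropy_bound[OF open_UNIV UNIV_not_empty assms T f, of n] by simp
qed

theorem mainTheorem8:
  "\<exists>C3::real. C3 \<ge> 1 \<and>
     (\<forall>(\<Omega>::'a::euclidean_space set) (\<Sigma>::'a set) (n::nat) (T::real) f.
        open \<Omega> \<and> \<Omega> \<noteq> {} \<and> submanifold n \<Sigma> \<and> T > 0 \<and> f \<in> VT1plus T \<longrightarrow>
        ennreal ((4 * pi * T) powr ((real DIM('a) - real n) / 2)) *
          (\<integral>\<^sup>+ x \<in> \<Sigma> \<inter> \<Omega>. ennreal (f x) \<partial>hausdorff_measure n)
        \<le> ennreal C3 * lambda_CM n \<Sigma> *
          (\<integral>\<^sup>+ x \<in> tube (2 * sqrt T) \<Omega>. ennreal (f x) \<partial>lborel)) \<and>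
     (\<forall>(\<Sigma>::'a set) (n::nat). submanifold n \<Sigma> \<longrightarrow>
        lambda_CM n \<Sigma> \<le> lambda_V n \<Sigma> \<and> lambda_V n \<Sigma> \<le> ennreal C3 * lambda_CM n \<Sigma>)"
proof (intro exI[of _ "entropy_constant DIM('a)"] conjI allI impI)
  fix \<Sigma> :: "'a set" and n :: nat
  assume "submanifold n \<Sigma>"
  then have "\<Sigma> \<in> sets borel" by (rule submanifold_sets_borel)
  then show "lambda_CM n \<Sigma> \<le> lambda_V n \<Sigma>" "lambda_V n \<Sigma> \<le> ennreal (entropy_constant DIM('a)) * lambda_CM n \<Sigma>"
    by (rule lambda_CM_le_lambda_V, rule lambda_V_le_lambda_CM)
qed (auto intro!: VT1plus_localized_entropy_bound submanifold_sets_borel simp: one_le_entropy_constant)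

end
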